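(* Let $n\geqslant 0$. The group $W_n$ acts transitively on the set of $n$-simplices of the barycentric subdivision $\operatorname{sd}\mathcal{C}^n$, and every simplex of $\operatorname{sd}\mathcal{C}^n$ is a face of an $n$-simplex.
   Context: Standing setup: $\Gamma_1$ is an arbitrary finite Coxeter diagram with a preferred vertex $s_1$ (edge $\{s,t\}$ iff $m_{st}\geqslant3$; unlabelled edge means $m_{st}=3$, no edge means $m_{st}=2$). For $n\geqslant 2$, $\Gamma_n$ is obtained from $\Gamma_{n-1}$ by adding one new vertex $s_n$ joined by an unlabelled edge to $s_{n-1}$ and to no other vertex. $\Gamma_0$ is $\Gamma_1$ with $s_1$ deleted; $\Gamma_{-1}$ is $\Gamma_1$ with $s_1$ and all its neighbours deleted. For $n\geqslant -1$, $S_n$ is the vertex set of $\Gamma_n$ and $W_n$ the Coxeter group; $W_m$ ($m\leqslant n$) is the standard parabolic subgroup of $W_n$ generated by $S_m$. Definition of $\mathcal{C}^n$ ($n\geqslant 0$): the abstract simplicial complex with vertex set $W_n/W_{n-1}$ whose $k$-simplices ($0\leqslant k\leqslant n$) are the sets $\{c(s_{n-k+1}\cdots s_n)W_{n-1},\ \ldots,\ cs_nW_{n-1},\ cW_{n-1}\}$ for $c\in W_n$. $W_n$ acts on $\mathcal{C}^n$ via its left action on $W_n/W_{n-1}$. The barycentric subdivision $\operatorname{sd}X$ of a simplicial complex $X$ has the simplices of $X$ as vertices, with simplices the chains $C_0\subset\cdots\subset C_k$; $W_n$ acts on $\operatorname{sd}\mathcal{C}^n$ by the induced action. *)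

theory Defs
  imports Main "HOL-Library.Extended_Nat"
begin

text \<open>No edge means M s t = 2.\<close>

definition coxeter_diagram :: "'a set \<Rightarrow> 'a \<Rightarrow> ('a \<Rightarrow> 'a \<Rightarrow> enat) \<Rightarrow> bool" where
  "coxeter_diagram V s1 M \<longleftrightarrow> finite V \<and> s1 \<in> V \<and> (\<forall>s\<in>V. M s s = 1)
     \<and> (\<forall>s\<in>V. \<forall>t\<in>V. M s t = M t s) \<and> (\<forall>s\<in>V. \<forall>t\<in>V. s \<noteq> t \<longrightarrow> M s t \<ge> 2)"

text \<open>Vertices of Gamma_n: Inl v for v in V (with s_1 = Inl s1), and Inr k for the
  new vertex s_k, 2 \<le> k \<le> n.\<close>

definition gen :: "'a \<Rightarrow> nat \<Rightarrow> 'a + nat" where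
  "gen s1 k = (if k = 1 then Inl s1 else Inr k)"

text \<open>Coxeter matrix of Gamma_n (for all n simultaneously): s_k -- s_(k+1) unlabelled edges,
  s_2 joined to s_1 only.\<close>

fun ext_m :: "'a \<Rightarrow> ('a \<Rightarrow> 'a \<Rightarrow> enat) \<Rightarrow> 'a + nat \<Rightarrow> 'a + nat \<Rightarrow> enat" where
  "ext_m s1 M (Inl a) (Inl b) = M a b"
| "ext_m s1 M (Inr i) (Inr j) = (if i = j then 1 else if i = j + 1 \<or> j = i + 1 then 3 else 2)"
| "ext_m s1 M (Inl a) (Inr j) = (if a = s1 \<and> j = 2 then 3 else 2)"
| "ext_m s1 M (Inr i) (Inl a) = (if a = s1 \<and> i = 2 then 3 else 2)"

definition Sgen :: "'a set \<Rightarrow> 'a \<Rightarrow> ('a \<Rightarrow> 'a \<Rightarrow> enat) \<Rightarrow> int \<Rightarrow> ('a + nat) set" where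
  "Sgen V s1 M n =
     (if n \<ge> 1 then Inl ` V \<union> Inr ` {2..nat n}
      else if n = 0 then Inl ` (V - {s1})
      else Inl ` {v \<in> V. v \<noteq> s1 \<and> \<not> (M s1 v \<ge> 3)})"

inductive cox_eq :: "'g set \<Rightarrow> ('g \<Rightarrow> 'g \<Rightarrow> enat) \<Rightarrow> 'g list \<Rightarrow> 'g list \<Rightarrow> bool"
  for S m where
  refl: "xs \<in> lists S \<Longrightarrow> cox_eq S m xs xs"
| sym: "cox_eq S m xs ys \<Longrightarrow> cox_eq S m ys xs"
| trans: "cox_eq S m xs ys \<Longrightarrow> cox_eq S m ys zs \<Longrightarrow> cox_eq S m xs zs"
| sq: "s \<in> S \<Longrightarrow> u \<in> lists S \<Longrightarrow> v \<in> lists S \<Longrightarrow> cox_eq S m (u @ [s, s] @ v) (u @ v)"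
| braid: "s \<in> S \<Longrightarrow> t \<in> S \<Longrightarrow> s \<noteq> t \<Longrightarrow> m s t = enat k \<Longrightarrow> u \<in> lists S \<Longrightarrow> v \<in> lists S
     \<Longrightarrow> cox_eq S m (u @ concat (replicate k [s, t]) @ v) (u @ v)"

text \<open>The element of W_n represented by a word w over S_n (an equivalence class of words).\<close>

definition cls :: "'a set \<Rightarrow> 'a \<Rightarrow> ('a \<Rightarrow> 'a \<Rightarrow> enat) \<Rightarrow> nat \<Rightarrow> ('a + nat) list \<Rightarrow> ('a + nat) list set" where
  "cls V s1 M n w = {v. cox_eq (Sgen V s1 M (int n)) (ext_m s1 M) w v}"

definition coset :: "'a set \<Rightarrow> 'a \<Rightarrow> ('a \<Rightarrow> 'a \<Rightarrow> enat) \<Rightarrow> nat \<Rightarrow> ('a + nat) list \<Rightarrow> ('a + nat) list set set" where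
  "coset V s1 M n c = {cls V s1 M n (c @ w) | w. w \<in> lists (Sgen V s1 M (int n - 1))}"

text \<open>The k-simplex {c(s_(n-k+1)...s_n)W_(n-1), ..., c s_n W_(n-1), c W_(n-1)} of C^n.\<close>

definition csimplex :: "'a set \<Rightarrow> 'a \<Rightarrow> ('a \<Rightarrow> 'a \<Rightarrow> enat) \<Rightarrow> nat \<Rightarrow> ('a + nat) list \<Rightarrow> nat
    \<Rightarrow> ('a + nat) list set set set" where
  "csimplex V s1 M n c k =
     {coset V s1 M n (c @ map (gen s1) [i..<n+1]) | i. n - k + 1 \<le> i \<and> i \<le> n + 1}"

definition Cn :: "'a set \<Rightarrow> 'a \<Rightarrow> ('a \<Rightarrow> 'a \<Rightarrow> enat) \<Rightarrow> nat \<Rightarrow> ('a + nat) list set set set set" where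
  "Cn V s1 M n = {csimplex V s1 M n c k | c k. c \<in> lists (Sgen V s1 M (int n)) \<and> k \<le> n}"

text \<open>Barycentric subdivision: simplices are the nonempty finite chains of simplices.
  A chain C_0 \<subset> ... \<subset> C_k is a k-simplex, i.e. has k+1 elements.\<close>

definition sd :: "'v set set \<Rightarrow> 'v set set set" where
  "sd K = {F. F \<noteq> {} \<and> finite F \<and> F \<subseteq> K \<and> (\<forall>A\<in>F. \<forall>B\<in>F. A \<subseteq> B \<or> B \<subseteq> A)}"

definition act_vert :: "'a set \<Rightarrow> 'a \<Rightarrow> ('a \<Rightarrow> 'a \<Rightarrow> enat) \<Rightarrow> nat \<Rightarrow> ('a + nat) list
    \<Rightarrow> ('a + nat) list set set \<Rightarrow> ('a + nat) list set set" where
  "act_vert V s1 M n g X =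
     {cls V s1 M n (g @ w) | w. w \<in> lists (Sgen V s1 M (int n)) \<and> cls V s1 M n w \<in> X}"

definition act_sd :: "'a set \<Rightarrow> 'a \<Rightarrow> ('a \<Rightarrow> 'a \<Rightarrow> enat) \<Rightarrow> nat \<Rightarrow> ('a + nat) list
    \<Rightarrow> ('a + nat) list set set set set \<Rightarrow> ('a + nat) list set set set set" where
  "act_sd V s1 M n g F = (\<lambda>C. act_vert V s1 M n g ` C) ` F"

end

theory Submission
  imports Defs Complex_Main "HOL-Combinatorics.Permutations"
begin

text \<open>
  Write vertex c i for the coset c s_i \<dots> s_n W_{n-1}, so that the k-simplex of c has the
  vertices vertex c i, n - k + 1 \<le> i \<le> n + 1.  Multiplying c on the right by s_j (1 \<le> j \<le> n)
  permutes these n + 1 vertices by the transposition (j, j + 1), and they are pairwise distinct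
  because s_n \<notin> W_{n-1}, which the Tits representation detects.  A simplex of sd C^n is a chain of
  faces of its largest member, the simplex of some c; renumbering the vertices of c by a suitable
  permutation, realised by a word in s_1, \<dots>, s_n, turns the chain into part of the full flag of
  faces of a simplex c'.  Full flags are the n-simplices of sd C^n, and W_n permutes them
  transitively since it acts transitively on the words c.
\<close>

section \<open>Words modulo the Coxeter relations\<close>

declare cox_eq.trans [trans]

lemma cox_eq_lists: "cox_eq S m x y \<Longrightarrow> x \<in> lists S \<and> y \<in> lists S"
proof (induction rule: cox_eq.induct)
  case (braid s t k u v)
  have "set (concat (replicate k [s, t])) \<subseteq> {s, t}" by (induction k) auto
  with braid show ?case by auto
qed simp_all

lemma cox_eq_append_context:
  "cox_eq S m x y \<Longrightarrow> u \<in> lists S \<Longrightarrow> w \<in> lists S \<Longrightarrow> cox_eq S m (u @ x @ w) (u @ y @ w)"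
proof (induction arbitrary: u w rule: cox_eq.induct)
  case (refl xs) then show ?case by (intro cox_eq.refl) auto
next
  case (sym xs ys) then show ?case by (auto intro: cox_eq.sym)
next
  case (trans xs ys zs) then show ?case by (meson cox_eq.trans)
next
  case (sq s u' v')
  have "cox_eq S m ((u @ u') @ [s, s] @ (v' @ w)) ((u @ u') @ (v' @ w))"
    by (rule cox_eq.sq) (use sq in auto)
  then show ?case by simp
next
  case (braid s t k u' v')
  have "cox_eq S m ((u @ u') @ concat (replicate k [s, t]) @ (v' @ w)) ((u @ u') @ (v' @ w))"
    by (rule cox_eq.braid) (use braid in simp_all)
  then show ?case by simp
qed

lemma cox_eq_append_left: "cox_eq S m x y \<Longrightarrow> u \<in> lists S \<Longrightarrow> cox_eq S m (u @ x) (u @ y)"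
  using cox_eq_append_context[of S m x y u "[]"] by simp

lemma cox_eq_append_right: "cox_eq S m x y \<Longrightarrow> w \<in> lists S \<Longrightarrow> cox_eq S m (x @ w) (y @ w)"
  using cox_eq_append_context[of S m x y "[]" w] by simp

lemma cox_eq_square: "s \<in> S \<Longrightarrow> cox_eq S m [s, s] []"
  using cox_eq.sq[of s S "[]" "[]" m] by simp

lemma cox_eq_rev_append_cancel:
  assumes "w \<in> lists S" shows "cox_eq S m (rev w @ w) []"
  using assms
proof (induction w)
  case Nil then show ?case by (auto intro: cox_eq.refl)
next
  case (Cons a w)
  then have "cox_eq S m (rev w @ [a, a] @ w) (rev w @ w)" by (intro cox_eq.sq) auto
  also have "cox_eq S m \<dots> []" using Cons by simp
  finally show ?case by simp
qed

lemma cox_eq_append_rev_cancel: "w \<in> lists S \<Longrightarrow> cox_eq S m (w @ rev w) []"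
  using cox_eq_rev_append_cancel[of "rev w" S m] by (simp add: lists_eq_set)

lemma cox_eq_braid_relation:
  assumes "s \<in> S" "t \<in> S" "s \<noteq> t" "m s t = enat k"
  shows "cox_eq S m (concat (replicate k [s, t])) []"
  using cox_eq.braid[of s S t m k "[]" "[]"] assms by simp

lemma cox_eq_commute:
  assumes "s \<in> S" "t \<in> S" "s \<noteq> t" "m s t = 2"
  shows "cox_eq S m [s, t] [t, s]"
proof -
  have stst: "cox_eq S m [s, t, s, t] []"
  proof -
    have "m s t = enat 2" using assms(4) by (simp add: enat_numeral)
    with cox_eq_braid_relation[of s S t m 2] assms show ?thesis by (simp add: numeral_2_eq_2)
  qed
  have "cox_eq S m ([s] @ [] @ [t]) ([s] @ [s, t, s, t] @ [t])"
    by (rule cox_eq.sym, rule cox_eq_append_context[OF stst]) (use assms in auto)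
  also have "cox_eq S m \<dots> ([] @ [t, s, t, t])"
    using cox_eq.sq[of s S "[]" "[t, s, t, t]" m] assms by simp
  also have "cox_eq S m \<dots> ([t, s] @ [])"
    using cox_eq.sq[of t S "[t, s]" "[]" m] assms by simp
  finally show ?thesis by simp
qed

lemma cox_eq_braid3:
  assumes "s \<in> S" "t \<in> S" "s \<noteq> t" "m s t = 3"
  shows "cox_eq S m [s, t, s] [t, s, t]"
proof -
  have stst: "cox_eq S m [s, t, s, t, s, t] []"
  proof -
    have "m s t = enat 3" using assms(4) by (simp add: enat_numeral)
    with cox_eq_braid_relation[of s S t m 3] assms show ?thesis by (simp add: numeral_3_eq_3)
  qed
  have "cox_eq S m ([t, s] @ [t, t] @ [s, t]) ([] @ [t] @ [s, s] @ [t])"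
    using cox_eq.sq[of t S "[t, s]" "[s, t]" m] assms by simp
  also have "cox_eq S m \<dots> [t, t]"
    using cox_eq.sq[of s S "[t]" "[t]" m] assms by simp
  also have "cox_eq S m \<dots> []"
    using cox_eq_square[of t S m] assms by simp
  finally have tsttst: "cox_eq S m [t, s, t, t, s, t] []" by simp
  have "cox_eq S m ([s, t, s] @ [] @ []) ([s, t, s] @ [t, s, t, t, s, t] @ [])"
    by (rule cox_eq.sym, rule cox_eq_append_context[OF tsttst]) (use assms in auto)
  also have "cox_eq S m \<dots> ([] @ [] @ [t, s, t])"
    using cox_eq_append_context[OF stst, of "[]" "[t, s, t]"] assms by simp
  finally show ?thesis by simp
qed

lemma cox_eq_commute_past:
  assumes "s \<in> S" "w \<in> lists S" "\<And>t. t \<in> set w \<Longrightarrow> t \<noteq> s \<and> m s t = 2"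
  shows "cox_eq S m (s # w) (w @ [s])"
  using assms(2,3)
proof (induction w)
  case Nil then show ?case using assms(1) by (auto intro: cox_eq.refl)
next
  case (Cons t w)
  have "cox_eq S m [s, t] [t, s]"
    by (rule cox_eq_commute[OF assms(1)]) (use Cons in auto)
  then have "cox_eq S m (s # t # w) (t # s # w)"
    using cox_eq_append_right[of S m "[s, t]" "[t, s]" w] Cons by simp
  also have "cox_eq S m \<dots> (t # w @ [s])"
    using cox_eq_append_left[of S m "s # w" "w @ [s]" "[t]"] Cons by simp
  finally show ?case by simp
qed

section \<open>The Tits representation\<close>

lemma sin_mult_recurrence:
  fixes x :: "nat \<Rightarrow> real"
  assumes rec: "\<And>j. x (j + 2) = 2 * cos p * x (j + 1) - x j"
  shows "sin p * x j = sin (real j * p) * x 1 - sin ((real j - 1) * p) * x 0"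
proof -
  have sin_rec: "sin (a + p) = 2 * cos p * sin a - sin (a - p)" for a
    by (simp add: sin_add sin_diff)
  have "sin p * x j = sin (real j * p) * x 1 - sin ((real j - 1) * p) * x 0 \<and>
        sin p * x (Suc j) = sin (real (Suc j) * p) * x 1 - sin (real j * p) * x 0"
  proof (induction j)
    case 0 then show ?case by simp
  next
    case (Suc j)
    have "x (Suc (Suc j)) = 2 * cos p * x (Suc j) - x j" using rec[of j] by simp
    then have "sin p * x (Suc (Suc j)) = 2 * cos p * (sin p * x (Suc j)) - sin p * x j"
      by (simp add: right_diff_distrib)
    also have "\<dots> = 2 * cos p * (sin (real (Suc j) * p) * x 1 - sin (real j * p) * x 0)
        - (sin (real j * p) * x 1 - sin ((real j - 1) * p) * x 0)"
      using Suc.IH by simp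
    also have "\<dots> = sin (real (Suc (Suc j)) * p) * x 1 - sin (real (Suc j) * p) * x 0"
    proof -
      have e1: "sin (real (Suc (Suc j)) * p) = 2 * cos p * sin (real (Suc j) * p) - sin (real j * p)"
        and e2: "sin (real (Suc j) * p) = 2 * cos p * sin (real j * p) - sin ((real j - 1) * p)"
        using sin_rec[of "real (Suc j) * p"] sin_rec[of "real j * p"] by (simp_all add: algebra_simps)
      show ?thesis unfolding e1 e2 by (simp add: algebra_simps)
    qed
    finally show ?case using Suc.IH by simp
  qed
  then show ?thesis by blast
qed

lemma cos_recurrence_periodic:
  fixes x :: "nat \<Rightarrow> real"
  assumes k: "k \<ge> 3" and rec: "\<And>j. x (j + 2) = 2 * cos (2 * pi / k) * x (j + 1) - x j"
  shows "x k = x 0"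
proof -
  define p where "p = 2 * pi / k"
  have kp: "real k * p = 2 * pi" using k by (simp add: p_def)
  have "sin p * x k = sin (real k * p) * x 1 - sin ((real k - 1) * p) * x 0"
    by (rule sin_mult_recurrence) (use rec in \<open>simp add: p_def\<close>)
  also have "sin ((real k - 1) * p) = - sin p"
    using kp by (simp add: algebra_simps sin_diff)
  finally have "sin p * x k = sin p * x 0" using kp by simp
  moreover have "sin p > 0"
    using k by (intro sin_gt_zero) (simp_all add: p_def field_simps)
  ultimately show ?thesis by simp
qed

lemma dihedral_recurrence_periodic:
  fixes X Y :: "nat \<Rightarrow> real"
  assumes k: "k \<ge> 2" and c: "c = cos (pi / k)"
    and X: "\<And>j. X (Suc j) = (4 * c\<^sup>2 - 1) * X j - 2 * c * Y j"
    and Y: "\<And>j. Y (Suc j) = 2 * c * X j - Y j"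
  shows "X k = X 0 \<and> Y k = Y 0"
proof (cases "k = 2")
  case True
  then have "c = 0" by (simp add: c)
  with True X Y show ?thesis by (simp add: numeral_2_eq_2)
next
  case False
  then have k3: "k \<ge> 3" using k by simp
  have "cos (2 * pi / k) = 2 * c\<^sup>2 - 1"
    using cos_double_cos[of "pi / k"] by (simp add: c)
  moreover have "X (j + 2) = (4 * c\<^sup>2 - 2) * X (j + 1) - X j"
    and "Y (j + 2) = (4 * c\<^sup>2 - 2) * Y (j + 1) - Y j" for j
    by (simp_all only: add_2_eq_Suc' Suc_eq_plus1[symmetric] X Y)
      (simp_all add: algebra_simps power2_eq_square)
  ultimately show ?thesis
    using cos_recurrence_periodic[OF k3, of X] cos_recurrence_periodic[OF k3, of Y] by simp
qed

definition tits_form :: "'g set \<Rightarrow> ('g \<Rightarrow> 'g \<Rightarrow> real) \<Rightarrow> 'g \<Rightarrow> ('g \<Rightarrow> real) \<Rightarrow> real" where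
  "tits_form S B s v = (\<Sum>u\<in>S. B s u * v u)"

definition tits_refl :: "'g set \<Rightarrow> ('g \<Rightarrow> 'g \<Rightarrow> real) \<Rightarrow> 'g \<Rightarrow> ('g \<Rightarrow> real) \<Rightarrow> 'g \<Rightarrow> real" where
  "tits_refl S B s v = (\<lambda>u. v u - (if u = s then 2 * tits_form S B s v else 0))"

definition tits_word :: "'g set \<Rightarrow> ('g \<Rightarrow> 'g \<Rightarrow> real) \<Rightarrow> 'g list \<Rightarrow> ('g \<Rightarrow> real) \<Rightarrow> 'g \<Rightarrow> real" where
  "tits_word S B w = foldr (tits_refl S B) w"

lemma tits_word_append: "tits_word S B (x @ y) = tits_word S B x \<circ> tits_word S B y"
  by (simp add: tits_word_def fun_eq_iff)

lemma tits_form_add_basis: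
  assumes "finite S" "s \<in> S"
  shows "tits_form S B r (\<lambda>u. v u + (if u = s then x else 0)) = tits_form S B r v + B r s * x"
  using assms by (simp add: tits_form_def algebra_simps sum.distrib if_distrib[of "(*) (B r _)"]
      cong: if_cong)

lemma tits_refl_involution:
  assumes "finite S" "s \<in> S" "B s s = 1"
  shows "tits_refl S B s (tits_refl S B s v) = v"
proof -
  have refl: "tits_refl S B s v = (\<lambda>u. v u + (if u = s then - 2 * tits_form S B s v else 0))"
    by (auto simp: tits_refl_def)
  have "tits_form S B s (tits_refl S B s v) = - tits_form S B s v"
    unfolding refl using tits_form_add_basis[OF assms(1,2)] assms(3) by simp
  then show ?thesis by (auto simp: tits_refl_def refl)
qed

lemma tits_refl_pair_plane:
  assumes S: "finite S" "s \<in> S" "t \<in> S" "s \<noteq> t"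
    and diag: "B s s = 1" "B t t = 1" and off: "B s t = - c" "B t s = - c"
    and y': "y' = 2 * c * x - y - 2 * tits_form S B t v"
  shows "(tits_refl S B s \<circ> tits_refl S B t) (\<lambda>u. v u + (if u = s then x else 0) + (if u = t then y else 0))
    = (\<lambda>u. v u + (if u = s then 2 * c * y' - x - 2 * tits_form S B s v else 0) + (if u = t then y' else 0))"
proof -
  define W where "W x y = (\<lambda>u. v u + (if u = s then x else 0) + (if u = t then y else 0))" for x y
  have form_W: "tits_form S B r (W x y) = tits_form S B r v + B r s * x + B r t * y" for r x y
    using tits_form_add_basis[OF S(1,3), of B r "\<lambda>u. v u + (if u = s then x else 0)" y]
      tits_form_add_basis[OF S(1,2), of B r v x]
    by (simp add: W_def)
  have "tits_refl S B t (W x y) = W x y'"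
    using S(4) unfolding tits_refl_def form_W by (auto simp: y' W_def off diag fun_eq_iff)
  moreover have "tits_refl S B s (W x y') = W (2 * c * y' - x - 2 * tits_form S B s v) y'"
    using S(4) unfolding tits_refl_def form_W by (auto simp: W_def off diag fun_eq_iff)
  ultimately show ?thesis by (simp add: W_def)
qed

lemma tits_refl_pair_power:
  assumes S: "finite S" "s \<in> S" "t \<in> S" "s \<noteq> t"
    and diag: "B s s = 1" "B t t = 1"
    and k: "k \<ge> 2" and off: "B s t = - cos (pi / k)" "B t s = - cos (pi / k)"
  shows "(tits_refl S B s \<circ> tits_refl S B t) ^^ k = id"
proof
  fix v
  define c where "c = cos (pi / k)"
  define p where "p = tits_form S B s v"
  define q where "q = tits_form S B t v"
  \<comment> \<open>the plane v + span {e_s, e_t} is invariant, and s t acts on it by the affine map rot\<close>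
  define W where "W = (\<lambda>(x, y). \<lambda>u. v u + (if u = s then x else 0) + (if u = t then y else 0))"
  define rot where "rot = (\<lambda>(x, y). let y' = 2 * c * x - y - 2 * q in (2 * c * y' - x - 2 * p, y'))"
  have off_c: "B s t = - c" "B t s = - c" using off by (simp_all add: c_def)
  have step: "(tits_refl S B s \<circ> tits_refl S B t) (W xy) = W (rot xy)" for xy
  proof (cases xy)
    case (Pair x y)
    show ?thesis using tits_refl_pair_plane[OF S diag off_c HOL.refl]
      by (simp add: Pair W_def rot_def Let_def p_def q_def)
  qed
  have orbit: "((tits_refl S B s \<circ> tits_refl S B t) ^^ j) v = W ((rot ^^ j) (0, 0))" for j
  proof (induction j)
    case 0 then show ?case by (simp add: W_def)
  next
    case (Suc j) then show ?case using step[of "(rot ^^ j) (0, 0)"] by simp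
  qed
  have "c < 1"
    using k by (simp add: c_def cos_monotone_0_pi[of 0 "pi / k", simplified] field_simps)
  moreover have "0 \<le> c"
  proof -
    have "0 < pi / k" "pi / k \<le> pi / 2" using k by (auto simp: field_simps)
    then show ?thesis unfolding c_def by (intro cos_ge_zero) auto
  qed
  ultimately have D: "1 - c\<^sup>2 > 0" by (simp add: abs_square_less_1)
  \<comment> \<open>rot has the fixed point (x0, y0); deviations from it obey the recurrence of a rotation by 2 pi / k\<close>
  define x0 where "x0 = - (p + c * q) / (1 - c\<^sup>2)"
  define y0 where "y0 = - (q + c * p) / (1 - c\<^sup>2)"
  have "p + x0 - c * y0 = 0" and "q + y0 - c * x0 = 0"
    using D unfolding x0_def y0_def by (simp_all add: field_simps power2_eq_square)
  then have p: "p = c * y0 - x0" and q: "q = c * x0 - y0" by simp_all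
  define X where "X j = fst ((rot ^^ j) (0, 0)) - x0" for j
  define Y where "Y j = snd ((rot ^^ j) (0, 0)) - y0" for j
  have "X (Suc j) = (4 * c\<^sup>2 - 1) * X j - 2 * c * Y j \<and> Y (Suc j) = 2 * c * X j - Y j" for j
    by (cases "(rot ^^ j) (0, 0)")
      (simp add: X_def Y_def rot_def Let_def p q algebra_simps power2_eq_square)
  then have "X k = X 0 \<and> Y k = Y 0"
    using dihedral_recurrence_periodic[OF k c_def] by blast
  then have "(rot ^^ k) (0, 0) = (0, 0)" by (simp add: X_def Y_def prod_eq_iff)
  then show "((tits_refl S B s \<circ> tits_refl S B t) ^^ k) v = id v"
    by (simp add: orbit W_def)
qed

lemma tits_word_replicate_pair:
  "tits_word S B (concat (replicate k [s, t])) = (tits_refl S B s \<circ> tits_refl S B t) ^^ k"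
  by (induction k) (simp_all add: tits_word_def)

lemma tits_word_cox_eq:
  assumes fin: "finite S" and diag: "\<And>s. s \<in> S \<Longrightarrow> B s s = 1"
    and off: "\<And>s t k. s \<in> S \<Longrightarrow> t \<in> S \<Longrightarrow> s \<noteq> t \<Longrightarrow> m s t = enat k \<Longrightarrow>
               k \<ge> 2 \<and> B s t = - cos (pi / k) \<and> B t s = - cos (pi / k)"
    and "cox_eq S m x y"
  shows "tits_word S B x = tits_word S B y"
  using \<open>cox_eq S m x y\<close>
proof (induction rule: cox_eq.induct)
  case (sq s u v)
  have "tits_word S B [s, s] = id"
    using tits_refl_involution[of S s B] fin sq(1) diag by (simp add: tits_word_def fun_eq_iff)
  then show ?case unfolding tits_word_append by simp
next
  case (braid s t k u v)
  have "tits_word S B (concat (replicate k [s, t])) = id"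
    unfolding tits_word_replicate_pair using off[OF braid(1-4)] fin braid(1-3) diag
    by (intro tits_refl_pair_power[of S s t B k]) auto
  then show ?case unfolding tits_word_append by simp
qed auto

lemma tits_word_coordinate_fixed: "r \<notin> set w \<Longrightarrow> tits_word S B w v r = v r"
  by (induction w) (auto simp: tits_word_def tits_refl_def)

section \<open>Adjacent transpositions and flags of subsets\<close>

fun adj_perm :: "nat list \<Rightarrow> nat \<Rightarrow> nat" where
  "adj_perm [] = id"
| "adj_perm (j # h) = transpose j (Suc j) \<circ> adj_perm h"

lemma adj_perm_append: "adj_perm (h @ h') = adj_perm h \<circ> adj_perm h'"
  by (induction h) auto

lemma adj_perm_in_range: "set h \<subseteq> {1..N} \<Longrightarrow> i \<in> {1..Suc N} \<Longrightarrow> adj_perm h i \<in> {1..Suc N}"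
  by (induction h) (auto simp: transpose_def)

lemma transpose_eq_adj_perm:
  assumes "a \<in> {1..Suc N}" "b \<in> {1..Suc N}"
  shows "\<exists>h. set h \<subseteq> {1..N} \<and> adj_perm h = transpose a b"
proof -
  have ordered: "\<exists>h. set h \<subseteq> {1..N} \<and> adj_perm h = transpose a b"
    if "1 \<le> a" "a < b" "b \<le> Suc N" for a b
    using that
  proof (induction "b - a" arbitrary: a)
    case 0 then show ?case by simp
  next
    case (Suc d)
    show ?case
    proof (cases "b = Suc a")
      case True
      with Suc.prems show ?thesis by (intro exI[of _ "[a]"]) auto
    next
      case False
      have "d = b - Suc a" using Suc.hyps(2) by arith
      with Suc.hyps(1) False Suc.prems obtain h
        where h: "set h \<subseteq> {1..N}" "adj_perm h = transpose (Suc a) b" by fastforce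
      \<comment> \<open>conjugating the transposition (a+1, b) by (a, a+1) gives (a, b)\<close>
      have "adj_perm ([a] @ h @ [a]) = transpose a b"
        using False Suc.prems by (auto simp: adj_perm_append h(2) fun_eq_iff transpose_def)
      with h Suc.prems show ?thesis by (intro exI[of _ "[a] @ h @ [a]"]) auto
    qed
  qed
  show ?thesis
  proof (cases a b rule: linorder_cases)
    case equal then show ?thesis by (intro exI[of _ "[]"]) auto
  next
    case less with ordered assms show ?thesis by simp
  next
    case greater with ordered[of b a] assms show ?thesis by (simp add: transpose_commute)
  qed
qed

lemma permutes_eq_adj_perm:
  assumes "p permutes {1..Suc N}" shows "\<exists>h. set h \<subseteq> {1..N} \<and> adj_perm h = p"
  using assms finite_atLeastAtMost
proof (induction rule: permutes_induct)
  case id then show ?case by (intro exI[of _ "[]"]) auto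
next
  case (swap a b p)
  obtain h where "set h \<subseteq> {1..N}" "adj_perm h = transpose a b"
    using transpose_eq_adj_perm swap.hyps by blast
  moreover obtain h' where "set h' \<subseteq> {1..N}" "adj_perm h' = p"
    using swap.IH by blast
  ultimately show ?case by (intro exI[of _ "h @ h'"]) (auto simp: adj_perm_append)
qed

lemma set_drop_eq_image_nth: "set (drop d L) = (\<lambda>i. L ! (i - 1)) ` {Suc d..length L}"
proof -
  have "set (drop d L) = (\<lambda>i. L ! (i + d)) ` {0..<length L - d}"
    by (auto simp: set_conv_nth image_iff add.commute) (use atLeastLessThan_iff in blast)
  also have "\<dots> = (\<lambda>i. L ! (i - 1)) ` ((\<lambda>i. i + Suc d) ` {0..<length L - d})"
    by (simp add: image_image)
  also have "(\<lambda>i. i + Suc d) ` {0..<length L - d} = {Suc d..length L}"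
    unfolding image_add_atLeastLessThan' by auto
  finally show ?thesis .
qed

lemma chain_suffix_enumeration:
  assumes "finite X" "\<A> \<subseteq> Pow X" "{} \<notin> \<A>" "chain\<^sub>\<subseteq> \<A>"
  shows "\<exists>L. distinct L \<and> set L = X \<and> (\<forall>A\<in>\<A>. A = set (drop (card X - card A) L))"
  using assms
proof (induction X arbitrary: \<A> rule: finite_psubset_induct)
  case (psubset X)
  show ?case
  proof (cases "X = {}")
    case True
    with psubset.prems show ?thesis by (intro exI[of _ "[]"]) auto
  next
    case False
    define \<A>' where "\<A>' = \<A> - {X}"
    have "finite \<A>'"
      using psubset.hyps(1) psubset.prems(1) finite_subset unfolding \<A>'_def by blast
    \<comment> \<open>X has an element outside all proper members of the chain, since these have a largest one\<close>
    have "\<Union>\<A>' \<subset> X"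
    proof (cases "\<A>' = {}")
      case True with False show ?thesis by auto
    next
      case ne: False
      have "\<Union>\<A>' \<in> \<A>'"
        using Union_in_chain[OF \<open>finite \<A>'\<close> ne, of UNIV] psubset.prems(3)
        by (auto simp: \<A>'_def subset.chain_def chain_subset_def)
      then show ?thesis using psubset.prems(1) unfolding \<A>'_def by auto
    qed
    then obtain x where x: "x \<in> X" "x \<notin> \<Union>\<A>'" by blast
    define X' where "X' = X - {x}"
    have X': "X' \<subset> X" "\<A>' \<subseteq> Pow X'"
      using x psubset.prems(1) by (auto simp: \<A>'_def X'_def)
    then obtain L' where L': "distinct L'" "set L' = X'"
      "\<forall>A\<in>\<A>'. A = set (drop (card X' - card A) L')"
      using psubset.IH[of X' \<A>'] psubset.prems by (auto simp: \<A>'_def chain_subset_def)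
    have card_X: "card X = Suc (card X')"
      unfolding X'_def using card_Suc_Diff1[OF psubset.hyps(1) x(1)] by linarith
    have "A = set (drop (card X - card A) (x # L'))" if "A \<in> \<A>" for A
    proof (cases "A = X")
      case True then show ?thesis using L' x by (auto simp: X'_def)
    next
      case False
      then have "A \<in> \<A>'" using that by (simp add: \<A>'_def)
      moreover have "card A \<le> card X'"
        using \<open>A \<in> \<A>'\<close> X' psubset.hyps(1) by (intro card_mono) (auto intro: finite_subset)
      ultimately show ?thesis using L'(3) card_X by (simp add: Suc_diff_le)
    qed
    with L' x show ?thesis by (intro exI[of _ "x # L'"]) (auto simp: X'_def)
  qed
qed

lemma chain_suffix_permutation:
  assumes "\<A> \<subseteq> Pow {1..N}" "{} \<notin> \<A>" "chain\<^sub>\<subseteq> \<A>"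
  shows "\<exists>p. p permutes {1..N} \<and> (\<forall>A\<in>\<A>. A = p ` {Suc (N - card A)..N})"
proof -
  obtain L where L: "distinct L" "set L = {1..N}" "\<forall>A\<in>\<A>. A = set (drop (N - card A) L)"
    using chain_suffix_enumeration[OF _ assms] by auto
  have len: "length L = N" using distinct_card[OF L(1)] L(2) by simp
  define p where "p i = (if i \<in> {1..N} then L ! (i - 1) else i)" for i
  have image_p: "p ` {Suc d..N} = set (drop d L)" for d
    unfolding set_drop_eq_image_nth len by (auto simp: p_def)
  have "bij_betw p {1..N} {1..N}"
  proof (rule bij_betw_imageI)
    show "inj_on p {1..N}"
      using L(1) len by (auto simp: inj_on_def p_def nth_eq_iff_index_eq)
    show "p ` {1..N} = {1..N}" using image_p[of 0] L(2) by simp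
  qed
  then have "p permutes {1..N}" by (rule bij_imp_permutes) (auto simp: p_def)
  with L(3) image_p show ?thesis by (intro exI[of _ p]) auto
qed

lemma chain_of_images_suffix_permutation:
  fixes f :: "nat \<Rightarrow> 'a" and N :: nat
  assumes F: "\<And>C. C \<in> F \<Longrightarrow> C \<noteq> {} \<and> C \<subseteq> f ` {1..N}" and chain: "chain\<^sub>\<subseteq> F"
  shows "\<exists>p. p permutes {1..N} \<and> (\<forall>C\<in>F. \<exists>m<N. C = f ` p ` {N - m..N})"
proof -
  define idx where "idx C = {i \<in> {1..N}. f i \<in> C}" for C
  have C_idx: "C = f ` idx C" if "C \<in> F" for C
    using F[OF that] by (auto simp: idx_def)
  have "idx ` F \<subseteq> Pow {1..N}" by (auto simp: idx_def)
  moreover have "{} \<notin> idx ` F"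
    using C_idx F by (metis image_empty imageE)
  moreover have "chain\<^sub>\<subseteq> (idx ` F)"
    unfolding chain_subset_def
  proof (intro ballI)
    fix X Y assume "X \<in> idx ` F" "Y \<in> idx ` F"
    then obtain A B where "A \<in> F" "B \<in> F" "X = idx A" "Y = idx B" by blast
    moreover have "A \<subseteq> B \<Longrightarrow> idx A \<subseteq> idx B" for A B by (auto simp: idx_def)
    ultimately show "X \<subseteq> Y \<or> Y \<subseteq> X" using chain unfolding chain_subset_def by metis
  qed
  ultimately obtain p where p: "p permutes {1..N}"
    and idx_p: "\<forall>A\<in>idx ` F. A = p ` {Suc (N - card A)..N}"
    using chain_suffix_permutation by meson
  have "\<exists>m<N. C = f ` p ` {N - m..N}" if C: "C \<in> F" for C
  proof -
    have "idx C \<noteq> {}" using C_idx[OF C] F[OF C] by auto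
    moreover have "idx C \<subseteq> {1..N}" by (auto simp: idx_def)
    ultimately have "0 < card (idx C)" "card (idx C) \<le> N"
      using card_mono[of "{1..N}" "idx C"] by (auto simp: card_gt_0_iff dest: finite_subset)
    moreover have "C = f ` p ` {Suc (N - card (idx C))..N}"
      using C_idx[OF C] idx_p C by auto
    ultimately show ?thesis by (intro exI[of _ "card (idx C) - 1"]) (auto simp: Suc_diff_le)
  qed
  with p show ?thesis by blast
qed

section \<open>The groups W_n and the cosets of W_{n-1}\<close>

locale coxeter_tower =
  fixes V :: "'a set" and s1 :: 'a and M :: "'a \<Rightarrow> 'a \<Rightarrow> enat" and n :: nat
  assumes diagram: "coxeter_diagram V s1 M"
begin

abbreviation "Sn \<equiv> Sgen V s1 M (int n)"
abbreviation "Sprev \<equiv> Sgen V s1 M (int n - 1)"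
abbreviation "mn \<equiv> ext_m s1 M"
abbreviation "weq \<equiv> cox_eq Sn mn"
abbreviation "sgen \<equiv> gen s1"

lemma finite_Sn: "finite Sn"
  using diagram by (auto simp: coxeter_diagram_def Sgen_def)

lemma Sn_cases: "x \<in> Sn \<Longrightarrow> (\<exists>a\<in>V. x = Inl a) \<or> (\<exists>i. 2 \<le> i \<and> i \<le> n \<and> x = Inr i)"
  by (auto simp: Sgen_def split: if_splits)

lemma Sprev_subset_Sn: "Sprev \<subseteq> Sn"
  by (cases "n \<ge> 2") (auto simp: Sgen_def)

lemma sgen_in_Sn: "1 \<le> i \<Longrightarrow> i \<le> n \<Longrightarrow> sgen i \<in> Sn"
  using diagram by (auto simp: coxeter_diagram_def Sgen_def gen_def)

lemma sgen_in_Sprev: "1 \<le> i \<Longrightarrow> i < n \<Longrightarrow> sgen i \<in> Sprev"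
  using diagram by (auto simp: coxeter_diagram_def Sgen_def gen_def)

lemma sgen_last_notin_Sprev: "sgen n \<notin> Sprev"
  by (auto simp: Sgen_def gen_def)

lemma sgen_inject: "1 \<le> i \<Longrightarrow> 1 \<le> j \<Longrightarrow> sgen i = sgen j \<longleftrightarrow> i = j"
  by (auto simp: gen_def)

lemma mn_sgen:
  "1 \<le> i \<Longrightarrow> 1 \<le> j \<Longrightarrow> i \<noteq> j \<Longrightarrow> mn (sgen i) (sgen j) = (if i = j + 1 \<or> j = i + 1 then 3 else 2)"
  by (auto simp: gen_def)

lemma mn_sym: "x \<in> Sn \<Longrightarrow> y \<in> Sn \<Longrightarrow> mn x y = mn y x"
  using diagram Sn_cases[of x] Sn_cases[of y] by (auto simp: coxeter_diagram_def)

lemma mn_ge_2: assumes "x \<in> Sn" "y \<in> Sn" "x \<noteq> y" shows "mn x y \<ge> 2"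
  using Sn_cases[OF assms(1)] Sn_cases[OF assms(2)] assms(3) diagram
  by (elim disjE bexE exE conjE) (auto simp: coxeter_diagram_def)

text \<open>No relation is imposed for m = \<infinity>, so the value 0 used there is arbitrary.\<close>

definition tits_matrix :: "'a + nat \<Rightarrow> 'a + nat \<Rightarrow> real" where
  "tits_matrix x y = (if x = y then 1 else case mn x y of enat k \<Rightarrow> - cos (pi / k) | \<infinity> \<Rightarrow> 0)"

lemma tits_word_weq: "weq x y \<Longrightarrow> tits_word Sn tits_matrix x = tits_word Sn tits_matrix y"
proof (rule tits_word_cox_eq[OF finite_Sn])
  fix x y k assume "x \<in> Sn" "y \<in> Sn" "x \<noteq> y" "mn x y = enat k"
  then show "k \<ge> 2 \<and> tits_matrix x y = - cos (pi / k) \<and> tits_matrix y x = - cos (pi / k)"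
    using mn_ge_2[of x y] mn_sym[of x y] by (auto simp: tits_matrix_def enat_numeral[symmetric])
qed (simp_all add: tits_matrix_def)

lemma sgen_last_not_weq_Sprev:
  assumes "1 \<le> n" "w \<in> lists Sprev" shows "\<not> weq [sgen n] w"
proof
  assume "weq [sgen n] w"
  define e where "e = (\<lambda>u. if u = sgen n then (1::real) else 0)"
  \<comment> \<open>s_n reflects the basis vector e_{s_n}, while a word without s_n fixes its coordinate\<close>
  have "tits_word Sn tits_matrix w e (sgen n) = 1"
    using assms(2) sgen_last_notin_Sprev tits_word_coordinate_fixed[of "sgen n" w] by (auto simp: e_def)
  moreover have "tits_form Sn tits_matrix (sgen n) e = 1"
    using sgen_in_Sn[OF assms(1) order.refl] finite_Sn
    by (simp add: tits_form_def e_def tits_matrix_def if_distrib cong: if_cong)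
  then have "tits_word Sn tits_matrix [sgen n] e (sgen n) = -1"
    by (simp add: tits_word_def tits_refl_def e_def)
  ultimately show False using tits_word_weq[OF \<open>weq [sgen n] w\<close>] by simp
qed

abbreviation "cls_n \<equiv> cls V s1 M n"
abbreviation "coset_n \<equiv> coset V s1 M n"
abbreviation "act_n \<equiv> act_vert V s1 M n"

lemma cls_eqI: "weq a b \<Longrightarrow> cls_n a = cls_n b"
  unfolding cls_def by (auto intro: cox_eq.trans cox_eq.sym)

lemma weq_if_cls_eq: "cls_n a = cls_n b \<Longrightarrow> a \<in> lists Sn \<Longrightarrow> weq b a"
  unfolding cls_def by (metis (mono_tags) cox_eq.refl mem_Collect_eq)

lemma lists_Sprev_subset: "lists Sprev \<subseteq> lists Sn"
  using Sprev_subset_Sn by auto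

lemma coset_eqI: assumes "weq x (y @ u)" "u \<in> lists Sprev" shows "coset_n x = coset_n y"
proof -
  have u: "u \<in> lists Sn" "rev u \<in> lists Sprev" using assms(2) lists_Sprev_subset by auto
  have "cls_n (x @ w) \<in> coset_n y" if "w \<in> lists Sprev" for w
  proof -
    have "weq (x @ w) (y @ (u @ w))"
      using cox_eq_append_right[OF assms(1), of w] that lists_Sprev_subset by auto
    then have "cls_n (x @ w) = cls_n (y @ (u @ w))" by (rule cls_eqI)
    with that assms(2) show ?thesis unfolding coset_def by (auto intro!: exI[of _ "u @ w"])
  qed
  moreover have "cls_n (y @ w) \<in> coset_n x" if "w \<in> lists Sprev" for w
  proof -
    have y: "y \<in> lists Sn" using cox_eq_lists[OF assms(1)] by simp
    have w: "w \<in> lists Sn" using that lists_Sprev_subset by auto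
    have "weq (y @ (u @ rev u) @ w) (y @ [] @ w)"
      using cox_eq_append_context[OF cox_eq_append_rev_cancel[OF u(1)] y w] .
    then have "weq (y @ w) ((y @ u) @ (rev u @ w))" by (simp add: cox_eq.sym)
    also have "weq \<dots> (x @ (rev u @ w))"
      using cox_eq_append_right[OF cox_eq.sym[OF assms(1)], of "rev u @ w"] u w
      by (simp add: lists_eq_set)
    finally have "cls_n (y @ w) = cls_n (x @ (rev u @ w))" by (rule cls_eqI)
    moreover have "rev u @ w \<in> lists Sprev" using that u by simp
    ultimately show ?thesis unfolding coset_def by (auto intro!: exI[of _ "rev u @ w"])
  qed
  ultimately show ?thesis unfolding coset_def by blast
qed

lemma coset_weq: "weq x y \<Longrightarrow> coset_n x = coset_n y"
  using coset_eqI[of x y "[]"] by simp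

lemma act_vert_coset:
  assumes "h \<in> lists Sn" "c \<in> lists Sn" shows "act_n h (coset_n c) = coset_n (h @ c)"
proof
  show "act_n h (coset_n c) \<subseteq> coset_n (h @ c)"
  proof
    fix z assume "z \<in> act_n h (coset_n c)"
    then obtain w u where w: "w \<in> lists Sn" "z = cls_n (h @ w)" "u \<in> lists Sprev" "cls_n w = cls_n (c @ u)"
      by (auto simp: act_vert_def coset_def)
    then have "weq (h @ w) (h @ (c @ u))"
      using cox_eq_append_left[OF cox_eq.sym[OF weq_if_cls_eq]] assms(1) by blast
    then have "z = cls_n ((h @ c) @ u)" using w(2) cls_eqI[of "h @ w"] by simp
    with w(3) show "z \<in> coset_n (h @ c)" unfolding coset_def by blast
  qed
next
  show "coset_n (h @ c) \<subseteq> act_n h (coset_n c)"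
  proof
    fix z assume "z \<in> coset_n (h @ c)"
    then obtain u where u: "u \<in> lists Sprev" "z = cls_n ((h @ c) @ u)" by (auto simp: coset_def)
    then have "c @ u \<in> lists Sn" "cls_n (c @ u) \<in> coset_n c"
      using assms lists_Sprev_subset by (auto simp: coset_def)
    with u(2) show "z \<in> act_n h (coset_n c)" unfolding act_vert_def by fastforce
  qed
qed

lemma coset_append_cancel:
  assumes "coset_n (h @ x) = coset_n (h @ y)" "h \<in> lists Sn" "x \<in> lists Sn" "y \<in> lists Sn"
  shows "coset_n x = coset_n y"
proof -
  have cancel: "coset_n (rev h @ h @ z) = coset_n z" if "z \<in> lists Sn" for z
    using coset_weq[OF cox_eq_append_right[OF cox_eq_rev_append_cancel[OF assms(2)] that]] by simp
  have "coset_n (rev h @ h @ x) = coset_n (rev h @ h @ y)"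
    using act_vert_coset[of "rev h" "h @ x"] act_vert_coset[of "rev h" "h @ y"] assms
    by (simp add: lists_eq_set)
  with cancel assms(3,4) show ?thesis by simp
qed

section \<open>The complex C^n and its barycentric subdivision\<close>

definition tail :: "nat \<Rightarrow> ('a + nat) list" where
  "tail i = map sgen [i..<Suc n]"

lemma tail_in_lists: "1 \<le> i \<Longrightarrow> tail i \<in> lists Sn"
  by (auto simp: tail_def intro!: sgen_in_Sn)

lemma tail_Cons: "i \<le> n \<Longrightarrow> tail i = sgen i # tail (Suc i)"
  by (simp add: tail_def upt_conv_Cons del: upt_Suc)

lemma sgen_commute_past:
  assumes "1 \<le> j" "j \<le> n" "\<And>l. l \<in> set ls \<Longrightarrow> 1 \<le> l \<and> l \<le> n \<and> (Suc l < j \<or> Suc j < l)"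
  shows "weq (sgen j # map sgen ls) (map sgen ls @ [sgen j])"
proof (rule cox_eq_commute_past)
  show "sgen j \<in> Sn" using assms(1,2) by (rule sgen_in_Sn)
  show "map sgen ls \<in> lists Sn" using assms(3) by (auto intro!: sgen_in_Sn)
  fix t assume "t \<in> set (map sgen ls)"
  then obtain l where "t = sgen l" "1 \<le> l" "l \<le> n" "Suc l < j \<or> Suc j < l"
    using assms(3) by auto
  with assms(1) show "t \<noteq> sgen j \<and> mn (sgen j) t = 2"
    using sgen_inject[of l j] mn_sgen[of j l] by auto
qed

lemma sgen_Cons_tail_below:
  assumes "1 \<le> i" "i < j" "j \<le> n"
  shows "weq (sgen j # tail i) (tail i @ [sgen (j - 1)])"
proof -
  define pre where "pre = map sgen [i..<j - 1]"
  define post where "post = tail (Suc j)"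
  have j1: "1 \<le> j - 1" "j - 1 \<le> n" "Suc (j - 1) = j" using assms by auto
  have pre: "pre \<in> lists Sn"
    unfolding pre_def using assms by (auto intro!: sgen_in_Sn simp: less_diff_conv)
  have post: "post \<in> lists Sn"
    unfolding post_def by (simp add: tail_in_lists)
  have sj: "sgen j \<in> Sn" and sj1: "sgen (j - 1) \<in> Sn"
    using assms j1 by (auto intro: sgen_in_Sn)
  have split: "tail i = pre @ [sgen (j - 1), sgen j] @ post"
  proof -
    have "[i..<Suc n] = [i..<j - 1] @ [j - 1..<Suc n]"
      using assms upt_add_eq_append[of i "j - 1" "Suc n - (j - 1)"] by simp
    also have "[j - 1..<Suc n] = (j - 1) # j # [Suc j..<Suc n]"
      using assms j1 by (metis le_imp_less_Suc upt_conv_Cons)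
    finally show ?thesis by (simp add: tail_def pre_def post_def)
  qed
  have "weq (sgen j # pre) (pre @ [sgen j])"
    unfolding pre_def using assms by (intro sgen_commute_past) (auto simp: less_diff_conv)
  then have "weq ((sgen j # pre) @ [sgen (j - 1), sgen j] @ post) ((pre @ [sgen j]) @ [sgen (j - 1), sgen j] @ post)"
    using sj sj1 post by (intro cox_eq_append_right) auto
  also have "weq \<dots> (pre @ [sgen (j - 1), sgen j, sgen (j - 1)] @ post)"
  proof -
    have "mn (sgen j) (sgen (j - 1)) = 3" using mn_sgen[of j "j - 1"] assms j1 by auto
    then have "weq [sgen j, sgen (j - 1), sgen j] [sgen (j - 1), sgen j, sgen (j - 1)]"
      using cox_eq_braid3[OF sj sj1] assms j1 sgen_inject[of j "j - 1"] by auto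
    from cox_eq_append_context[OF this pre post] show ?thesis by simp
  qed
  also have "weq \<dots> ((pre @ [sgen (j - 1), sgen j]) @ (post @ [sgen (j - 1)]))"
  proof -
    have "weq (sgen (j - 1) # post) (post @ [sgen (j - 1)])"
      unfolding post_def tail_def using j1 by (intro sgen_commute_past) auto
    from cox_eq_append_left[OF this, of "pre @ [sgen (j - 1), sgen j]"] pre sj sj1 show ?thesis by simp
  qed
  finally show ?thesis unfolding split by simp
qed

lemma sgen_Cons_tail:
  assumes "1 \<le> j" "j \<le> n" "1 \<le> i" "i \<le> Suc n"
  shows "\<exists>u\<in>lists Sprev. weq (sgen j # tail i) (tail (transpose j (Suc j) i) @ u)"
proof -
  have sj: "sgen j \<in> Sn" using assms(1,2) by (rule sgen_in_Sn)
  consider "i = Suc j" | "i = j" | "Suc j < i" | "i < j" by linarith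
  then show ?thesis
  proof cases
    case 1
    then have "sgen j # tail i = tail (transpose j (Suc j) i)" using assms by (simp add: tail_Cons)
    moreover have "weq (tail j) (tail j)" using tail_in_lists[OF assms(1)] by (rule cox_eq.refl)
    ultimately show ?thesis using 1 by (intro bexI[of _ "[]"]) auto
  next
    case 2
    have "weq ([] @ [sgen j, sgen j] @ tail (Suc j)) ([] @ tail (Suc j))"
      using sj tail_in_lists[of "Suc j"] by (intro cox_eq.sq) auto
    with 2 assms show ?thesis by (intro bexI[of _ "[]"]) (auto simp: tail_Cons)
  next
    case 3
    then have "weq (sgen j # tail i) (tail i @ [sgen j])"
      unfolding tail_def using assms by (intro sgen_commute_past) auto
    moreover have "sgen j \<in> Sprev" using 3 assms by (intro sgen_in_Sprev) auto
    ultimately show ?thesis using 3 by (intro bexI[of _ "[sgen j]"]) auto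
  next
    case 4
    moreover have "sgen (j - 1) \<in> Sprev" using 4 assms by (intro sgen_in_Sprev) auto
    ultimately show ?thesis
      using sgen_Cons_tail_below[of i j] assms by (intro bexI[of _ "[sgen (j - 1)]"]) auto
  qed
qed

definition vertex :: "('a + nat) list \<Rightarrow> nat \<Rightarrow> ('a + nat) list set set" where
  "vertex c i = coset_n (c @ tail i)"

lemma vertex_snoc_sgen:
  assumes "c \<in> lists Sn" "1 \<le> j" "j \<le> n" "1 \<le> i" "i \<le> Suc n"
  shows "vertex (c @ [sgen j]) i = vertex c (transpose j (Suc j) i)"
proof -
  obtain u where u: "u \<in> lists Sprev" "weq (sgen j # tail i) (tail (transpose j (Suc j) i) @ u)"
    using sgen_Cons_tail assms(2-5) by blast
  then have "weq ((c @ [sgen j]) @ tail i) ((c @ tail (transpose j (Suc j) i)) @ u)"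
    using cox_eq_append_left[OF u(2) assms(1)] by simp
  then show ?thesis unfolding vertex_def using u(1) by (rule coset_eqI)
qed

lemma vertex_adj_perm:
  "set h \<subseteq> {1..n} \<Longrightarrow> c \<in> lists Sn \<Longrightarrow> i \<in> {1..Suc n} \<Longrightarrow>
    vertex (c @ map sgen h) i = vertex c (adj_perm h i)"
proof (induction h arbitrary: c)
  case (Cons j h)
  then have "vertex (c @ map sgen (j # h)) i = vertex (c @ [sgen j]) (adj_perm h i)"
    using Cons.IH[of "c @ [sgen j]"] sgen_in_Sn[of j] by simp
  also have "\<dots> = vertex c (adj_perm (j # h) i)"
    using Cons.prems adj_perm_in_range[of h n i] by (simp add: vertex_snoc_sgen)
  finally show ?case .
qed simp

lemma vertex_weq: "weq c c' \<Longrightarrow> 1 \<le> i \<Longrightarrow> vertex c i = vertex c' i"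
  unfolding vertex_def using coset_weq cox_eq_append_right tail_in_lists by blast

lemma act_vert_vertex:
  "h \<in> lists Sn \<Longrightarrow> c \<in> lists Sn \<Longrightarrow> 1 \<le> i \<Longrightarrow> act_n h (vertex c i) = vertex (h @ c) i"
  unfolding vertex_def using act_vert_coset tail_in_lists by simp

lemma coset_sgen_last_ne: assumes "1 \<le> n" shows "coset_n [sgen n] \<noteq> coset_n []"
proof
  assume "coset_n [sgen n] = coset_n []"
  moreover have "cls_n [sgen n] \<in> coset_n [sgen n]" unfolding coset_def by force
  ultimately obtain w where "w \<in> lists Sprev" "cls_n [sgen n] = cls_n w"
    unfolding coset_def by auto
  then have "weq w [sgen n]" using sgen_in_Sn[OF assms order.refl] by (simp add: weq_if_cls_eq)
  with sgen_last_not_weq_Sprev[OF assms \<open>w \<in> lists Sprev\<close>] show False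
    using cox_eq.sym by blast
qed

lemma inj_on_vertex: assumes c: "c \<in> lists Sn" shows "inj_on (vertex c) {1..Suc n}"
proof
  fix a b assume a: "a \<in> {1..Suc n}" and b: "b \<in> {1..Suc n}" and eq: "vertex c a = vertex c b"
  show "a = b"
  proof (rule ccontr)
    assume "a \<noteq> b"
    then have n: "1 \<le> n" using a b by auto
    \<comment> \<open>move a and b to positions n and n + 1, where the vertices differ by s_n only\<close>
    define a' where "a' = transpose b (Suc n) a"
    define p where "p = transpose b (Suc n) \<circ> transpose a' n"
    have "a' \<in> {1..Suc n}" "a' \<noteq> Suc n" using a b \<open>a \<noteq> b\<close> by (auto simp: a'_def transpose_def)
    then have "p permutes {1..Suc n}"
      unfolding p_def using b n by (intro permutes_compose permutes_swap_id) auto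
    then obtain h where h: "set h \<subseteq> {1..n}" "adj_perm h = p"
      using permutes_eq_adj_perm by blast
    have "p n = a" "p (Suc n) = b" using \<open>a' \<noteq> Suc n\<close> by (simp_all add: p_def a'_def)
    define c' where "c' = c @ map sgen h"
    have "\<forall>x\<in>set h. 1 \<le> x \<and> x \<le> n" using h(1) by auto
    then have c': "c' \<in> lists Sn" using c by (auto simp: c'_def intro!: sgen_in_Sn)
    have "vertex c' n = vertex c' (Suc n)"
      using vertex_adj_perm[OF h(1) c, of n] vertex_adj_perm[OF h(1) c, of "Suc n"] n eq h(2)
        \<open>p n = a\<close> \<open>p (Suc n) = b\<close> by (simp add: c'_def)
    then have "coset_n (c' @ [sgen n]) = coset_n (c' @ [])"
      by (simp add: vertex_def tail_def)
    then have "coset_n [sgen n] = coset_n []"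
      by (rule coset_append_cancel[OF _ c']) (simp_all add: sgen_in_Sn[OF n order.refl])
    with coset_sgen_last_ne[OF n] show False ..
  qed
qed

abbreviation "simplex \<equiv> csimplex V s1 M n"
abbreviation "complex \<equiv> Cn V s1 M n"

lemma simplex_eq_image_vertex: "simplex c k = vertex c ` {n - k + 1..n + 1}"
proof -
  have "coset_n (c @ map sgen [i..<n + 1]) = vertex c i" for i by (simp add: vertex_def tail_def)
  then show ?thesis unfolding csimplex_def by auto
qed

lemma simplex_adj_perm:
  assumes "set h \<subseteq> {1..n}" "c \<in> lists Sn"
  shows "simplex (c @ map sgen h) k = vertex c ` adj_perm h ` {n - k + 1..n + 1}"
  unfolding simplex_eq_image_vertex image_image
  using vertex_adj_perm[OF assms] by (intro image_cong) auto

lemma complex_memE: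
  assumes "C \<in> complex"
  obtains c k where "c \<in> lists Sn" "k \<le> n" "C = simplex c k"
  using assms unfolding Cn_def by blast

lemma complex_mem_nonempty: "C \<in> complex \<Longrightarrow> C \<noteq> {}"
  by (erule complex_memE) (auto simp: simplex_eq_image_vertex)

definition full_flag :: "('a + nat) list \<Rightarrow> ('a + nat) list set set set set" where
  "full_flag c = simplex c ` {..n}"

lemma sd_subset_full_flag:
  assumes F: "F \<in> sd complex" shows "\<exists>c'\<in>lists Sn. F \<subseteq> full_flag c'"
proof -
  have F: "F \<noteq> {}" "finite F" "F \<subseteq> complex" "chain\<^sub>\<subseteq> F"
    using F by (auto simp: sd_def chain_subset_def)
  \<comment> \<open>all members of the chain are faces of its largest member, the simplex of some c\<close>
  have "\<Union>F \<in> F"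
    using Union_in_chain[OF F(2,1), of UNIV] F(4) by (auto simp: subset.chain_def chain_subset_def)
  then obtain c k where c: "c \<in> lists Sn" "k \<le> n" "\<Union>F = simplex c k"
    using F(3) complex_memE by blast
  have "C \<noteq> {} \<and> C \<subseteq> vertex c ` {1..Suc n}" if "C \<in> F" for C
  proof -
    have "C \<subseteq> simplex c k" using that c(3) by auto
    with complex_mem_nonempty[of C] that F(3) show ?thesis
      by (auto simp: simplex_eq_image_vertex)
  qed
  then obtain p where p: "p permutes {1..Suc n}"
    and C_p: "\<forall>C\<in>F. \<exists>m<Suc n. C = vertex c ` p ` {Suc n - m..Suc n}"
    using chain_of_images_suffix_permutation[OF _ F(4)] by meson
  obtain h where h: "set h \<subseteq> {1..n}" "adj_perm h = p" using permutes_eq_adj_perm[OF p] by blast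
  define c' where "c' = c @ map sgen h"
  have "\<forall>x\<in>set h. 1 \<le> x \<and> x \<le> n" using h(1) by auto
  then have c': "c' \<in> lists Sn" using c(1) by (auto simp: c'_def intro!: sgen_in_Sn)
  have "C \<in> full_flag c'" if C: "C \<in> F" for C
  proof -
    obtain m where "m < Suc n" "C = vertex c ` p ` {Suc n - m..Suc n}" using C_p C by blast
    moreover have "simplex c' m = vertex c ` p ` {Suc n - m..Suc n}"
      using simplex_adj_perm[OF h(1) c(1), of m] h(2) \<open>m < Suc n\<close> by (simp add: c'_def Suc_diff_le)
    ultimately show ?thesis unfolding full_flag_def by (metis atMost_iff image_eqI less_Suc_eq_le)
  qed
  with c' show ?thesis by blast
qed

lemma full_flag_in_sd: assumes "c \<in> lists Sn" shows "full_flag c \<in> sd complex"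
proof -
  have "simplex c k \<subseteq> simplex c k'" if "k \<le> k'" for k k'
    unfolding simplex_eq_image_vertex using that by (intro image_mono) auto
  then have "simplex c k \<subseteq> simplex c k' \<or> simplex c k' \<subseteq> simplex c k" for k k'
    by (cases "k \<le> k'") auto
  with assms show ?thesis unfolding sd_def full_flag_def Cn_def by blast
qed

lemma card_full_flag: assumes "c \<in> lists Sn" shows "card (full_flag c) = n + 1"
proof -
  have card_simplex: "card (simplex c k) = k + 1" if "k \<le> n" for k
  proof -
    have "card (simplex c k) = card {n - k + 1..n + 1}"
      unfolding simplex_eq_image_vertex
      by (rule card_image, rule inj_on_subset[OF inj_on_vertex[OF assms]]) auto
    with that show ?thesis by simp
  qed
  have "inj_on (simplex c) {..n}"
    by (rule inj_onI) (metis card_simplex atMost_iff add_right_cancel)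
  then show ?thesis by (simp add: full_flag_def card_image)
qed

lemma full_flag_weq: "weq c c' \<Longrightarrow> full_flag c = full_flag c'"
  unfolding full_flag_def simplex_eq_image_vertex using vertex_weq by simp

lemma act_sd_full_flag:
  assumes "h \<in> lists Sn" "c \<in> lists Sn" shows "act_sd V s1 M n h (full_flag c) = full_flag (h @ c)"
  unfolding act_sd_def full_flag_def simplex_eq_image_vertex image_image
  using act_vert_vertex[OF assms] by simp

lemma sd_top_simplex_eq_full_flag:
  assumes "F \<in> sd complex" "card F = n + 1" shows "\<exists>c\<in>lists Sn. F = full_flag c"
proof -
  obtain c where c: "c \<in> lists Sn" "F \<subseteq> full_flag c" using sd_subset_full_flag[OF assms(1)] by blast
  moreover have "finite (full_flag c)" by (simp add: full_flag_def)
  ultimately have "F = full_flag c"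
    using assms(2) card_full_flag[OF c(1)] by (simp add: card_subset_eq)
  with c show ?thesis by blast
qed

lemma act_sd_transitive:
  assumes "F1 \<in> sd complex" "F2 \<in> sd complex" "card F1 = n + 1" "card F2 = n + 1"
  shows "\<exists>h\<in>lists Sn. act_sd V s1 M n h F1 = F2"
proof -
  obtain c1 c2 where c: "c1 \<in> lists Sn" "F1 = full_flag c1" "c2 \<in> lists Sn" "F2 = full_flag c2"
    using sd_top_simplex_eq_full_flag assms by meson
  define h where "h = c2 @ rev c1"
  have h: "h \<in> lists Sn" using c by (simp add: h_def lists_eq_set)
  have "weq (c2 @ (rev c1 @ c1)) (c2 @ [])"
    using cox_eq_append_left[OF cox_eq_rev_append_cancel[OF c(1)] c(3)] .
  then have "full_flag (h @ c1) = F2" using full_flag_weq c(4) by (simp add: h_def)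
  with h c show ?thesis using act_sd_full_flag by auto
qed

end

theorem lemma6p2:
  fixes V :: "'a set" and s1 :: 'a and M :: "'a \<Rightarrow> 'a \<Rightarrow> enat" and n :: nat
  assumes "coxeter_diagram V s1 M"
  shows "(\<forall>F1 \<in> sd (Cn V s1 M n). \<forall>F2 \<in> sd (Cn V s1 M n).
            card F1 = n + 1 \<longrightarrow> card F2 = n + 1 \<longrightarrow>
            (\<exists>g \<in> lists (Sgen V s1 M (int n)). act_sd V s1 M n g F1 = F2))
       \<and> (\<forall>F \<in> sd (Cn V s1 M n). \<exists>G \<in> sd (Cn V s1 M n). card G = n + 1 \<and> F \<subseteq> G)"
proof -
  interpret coxeter_tower V s1 M n by (rule coxeter_tower.intro) (rule assms)
  have "\<exists>G \<in> sd complex. card G = n + 1 \<and> F \<subseteq> G" if "F \<in> sd complex" for F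
    using sd_subset_full_flag[OF that] full_flag_in_sd card_full_flag by blast
  then show ?thesis using act_sd_transitive by blast
qed

end
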